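(* If $A\subset\mathbb{R}^n$ is monovex and $R\subset\mathbb{R}^n$ is an open box whose faces are parallel to the axes, then the Minkowski sum $A+R=\{a+r: a\in A, r\in R\}$ is monovex.
   Context: A set $A \subseteq \mathbb{R}^n$ is monovex if for every $x,y \in A$ there is a continuous path $\gamma:[0,1]\to A$ with $\gamma(0)=x$, $\gamma(1)=y$ and each coordinate $\gamma_i$ monotone (nondecreasing or nonincreasing). An open box with faces parallel to the axes is a set of the form $\times_{i=1}^n(a_i,b_i)$. *)

theory Defs
  imports "HOL-Analysis.Analysis"
begin

definition monovex :: "(real ^ 'n) set \<Rightarrow> bool" where
  "monovex A \<longleftrightarrow>
     (\<forall>x\<in>A. \<forall>y\<in>A. \<exists>\<gamma> :: real \<Rightarrow> real ^ 'n.
        continuous_on {0..1} \<gamma> \<and> \<gamma> ` {0..1} \<subseteq> A \<and>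
        \<gamma> 0 = x \<and> \<gamma> 1 = y \<and>
        (\<forall>i. mono_on {0..1} (\<lambda>t. \<gamma> t $ i) \<or> antimono_on {0..1} (\<lambda>t. \<gamma> t $ i)))"

definition open_box :: "(real ^ 'n) \<Rightarrow> (real ^ 'n) \<Rightarrow> (real ^ 'n) set" where
  "open_box a b = {x. \<forall>i. a $ i < x $ i \<and> x $ i < b $ i}"

end

theory Submission
  imports Defs
begin

text \<open>Given a monotone path \<open>g\<close> in \<open>A\<close> from \<open>x\<close> to \<open>y\<close> and offsets \<open>r, s\<close> in the box, the path
  from \<open>x + r\<close> to \<open>y + s\<close> is built coordinatewise as \<open>g\<^sub>i + clamp lo\<^sub>i hi\<^sub>i (L\<^sub>i - g\<^sub>i)\<close>, where \<open>L\<close> is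
  the straight segment from \<open>x + r\<close> to \<open>y + s\<close> and \<open>[lo\<^sub>i, hi\<^sub>i]\<close> is the interval spanned by \<open>r\<^sub>i\<close>
  and \<open>s\<^sub>i\<close>; the offset therefore stays in the box. If \<open>g\<^sub>i\<close> and \<open>L\<^sub>i\<close> move in the same
  direction, the coordinate equals \<open>max (g\<^sub>i + lo\<^sub>i) (min (g\<^sub>i + hi\<^sub>i) L\<^sub>i)\<close> and is monotone; if they
  move in opposite directions, \<open>L\<^sub>i - g\<^sub>i\<close> is monotone, hence stays between its endpoint values
  \<open>r\<^sub>i\<close> and \<open>s\<^sub>i\<close>, the clamp is inactive and the coordinate is \<open>L\<^sub>i\<close> itself.\<close>

abbreviation monotonic_on :: "'a::ord set \<Rightarrow> ('a \<Rightarrow> 'b::ord) \<Rightarrow> bool" where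
  "monotonic_on S f \<equiv> mono_on S f \<or> antimono_on S f"

definition clamp :: "'a::linorder \<Rightarrow> 'a \<Rightarrow> 'a \<Rightarrow> 'a" where
  "clamp lo hi v = max lo (min hi v)"

lemma monotonic_on_affine:
  fixes p q :: real
  shows "monotonic_on S (\<lambda>t. (1 - t) * p + t * q)"
proof (cases "p \<le> q")
  case True
  have "mono_on S (\<lambda>t. (1 - t) * p + t * q)"
  proof (rule mono_onI)
    fix r s :: real assume "r \<le> s"
    then have "(s - r) * p \<le> (s - r) * q" using True by (simp add: mult_left_mono)
    then show "(1 - r) * p + r * q \<le> (1 - s) * p + s * q" by (simp add: algebra_simps)
  qed
  then show ?thesis ..
next
  case False
  have "antimono_on S (\<lambda>t. (1 - t) * p + t * q)"
  proof (rule monotone_onI)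
    fix r s :: real assume "r \<le> s"
    then have "(s - r) * q \<le> (s - r) * p" using False by (simp add: mult_left_mono)
    then show "(1 - s) * p + s * q \<le> (1 - r) * p + r * q" by (simp add: algebra_simps)
  qed
  then show ?thesis ..
qed

lemma monotonic_on_clamp_track:
  fixes g L :: "real \<Rightarrow> real"
  assumes "u \<le> v" and g: "monotonic_on {u..v} g" and L: "monotonic_on {u..v} L"
  defines "lo \<equiv> min (L u - g u) (L v - g v)" and "hi \<equiv> max (L u - g u) (L v - g v)"
  shows "monotonic_on {u..v} (\<lambda>t. g t + clamp lo hi (L t - g t))"
proof -
  have ends: "u \<in> {u..v}" "v \<in> {u..v}" using \<open>u \<le> v\<close> by auto
  consider (mono) "mono_on {u..v} g" "mono_on {u..v} L"
    | (anti) "antimono_on {u..v} g" "antimono_on {u..v} L"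
    | (opposite) "\<And>t. t \<in> {u..v} \<Longrightarrow> lo \<le> L t - g t \<and> L t - g t \<le> hi"
  proof -
    have "lo \<le> L t - g t \<and> L t - g t \<le> hi"
      if "mono_on {u..v} g" "antimono_on {u..v} L" and t: "t \<in> {u..v}" for t
    proof -
      have "g u \<le> g t" "g t \<le> g v" "L t \<le> L u" "L v \<le> L t"
        using monotone_onD[OF that(1)] monotone_onD[OF that(2)] ends t by auto
      then show ?thesis unfolding lo_def hi_def by linarith
    qed
    moreover have "lo \<le> L t - g t \<and> L t - g t \<le> hi"
      if "antimono_on {u..v} g" "mono_on {u..v} L" and t: "t \<in> {u..v}" for t
    proof -
      have "g t \<le> g u" "g v \<le> g t" "L u \<le> L t" "L t \<le> L v"
        using monotone_onD[OF that(1)] monotone_onD[OF that(2)] ends t by auto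
      then show ?thesis unfolding lo_def hi_def by linarith
    qed
    ultimately show thesis using g L that by blast
  qed
  then show ?thesis
  proof cases
    case mono
    have "mono_on {u..v} (\<lambda>t. g t + clamp lo hi (L t - g t))"
    proof (rule mono_onI)
      fix r s assume "r \<in> {u..v}" "s \<in> {u..v}" "r \<le> s"
      then have "g r \<le> g s" "L r \<le> L s" using mono by (auto intro: mono_onD)
      then show "g r + clamp lo hi (L r - g r) \<le> g s + clamp lo hi (L s - g s)"
        unfolding clamp_def by linarith
    qed
    then show ?thesis ..
  next
    case anti
    have "antimono_on {u..v} (\<lambda>t. g t + clamp lo hi (L t - g t))"
    proof (rule monotone_onI)
      fix r s assume rs: "r \<in> {u..v}" "s \<in> {u..v}" "r \<le> s"
      have "g s \<le> g r" "L s \<le> L r"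
        using monotone_onD[OF anti(1) rs] monotone_onD[OF anti(2) rs] by simp_all
      then show "g s + clamp lo hi (L s - g s) \<le> g r + clamp lo hi (L r - g r)"
        unfolding clamp_def by linarith
    qed
    then show ?thesis ..
  next
    case opposite
    then have "g t + clamp lo hi (L t - g t) = L t" if "t \<in> {u..v}" for t
      using that unfolding clamp_def by fastforce
    then show ?thesis using L by (simp add: monotone_on_def)
  qed
qed

lemma clamp_in_open_box:
  assumes "r \<in> open_box a b" "s \<in> open_box a b"
  shows "(\<chi> i. clamp (min (r $ i) (s $ i)) (max (r $ i) (s $ i)) (v $ i)) \<in> open_box a b"
  using assms unfolding open_box_def clamp_def by (simp add: min_less_iff_disj less_max_iff_disj)

lemma monotone_path_add_box:
  fixes g :: "real \<Rightarrow> real ^ 'n"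
  assumes cont: "continuous_on {0..1} g" and mono: "\<And>i. monotonic_on {0..1} (\<lambda>t. g t $ i)"
    and box: "r \<in> open_box a b" "s \<in> open_box a b"
  obtains \<delta> where "continuous_on {0..1} \<delta>" and "\<delta> 0 = g 0 + r" and "\<delta> 1 = g 1 + s"
    and "\<And>t. \<delta> t - g t \<in> open_box a b" and "\<And>i. monotonic_on {0..1} (\<lambda>t. \<delta> t $ i)"
proof
  define L where "L t = (1 - t) *\<^sub>R (g 0 + r) + t *\<^sub>R (g 1 + s)" for t
  define \<delta> where
    "\<delta> t = g t + (\<chi> i. clamp (min (r $ i) (s $ i)) (max (r $ i) (s $ i)) (L t $ i - g t $ i))" for t
  show "continuous_on {0..1} \<delta>"
    unfolding \<delta>_def [abs_def] L_def clamp_def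
    by (intro continuous_intros continuous_on_vec_lambda continuous_on_component cont)
  show "\<delta> 0 = g 0 + r" "\<delta> 1 = g 1 + s"
    unfolding \<delta>_def L_def clamp_def by (simp_all add: vec_eq_iff)
  show "\<delta> t - g t \<in> open_box a b" for t
    unfolding \<delta>_def using clamp_in_open_box[OF box, of "L t - g t"] by simp
  show "monotonic_on {0..1} (\<lambda>t. \<delta> t $ i)" for i
  proof -
    have "monotonic_on {0..1} (\<lambda>t. L t $ i)"
      unfolding L_def by (simp add: monotonic_on_affine)
    from monotonic_on_clamp_track[OF zero_le_one mono[of i] this]
    show ?thesis unfolding \<delta>_def L_def by simp
  qed
qed

theorem lemma2:
  fixes A :: "(real ^ 'n) set" and a b :: "real ^ 'n"
  assumes "monovex A"
  shows "monovex {x + r | x r. x \<in> A \<and> r \<in> open_box a b}"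
  unfolding monovex_def
proof (intro ballI)
  let ?B = "{x + r | x r. x \<in> A \<and> r \<in> open_box a b}"
  fix P Q assume "P \<in> ?B" "Q \<in> ?B"
  then obtain x r y s where "x \<in> A" "y \<in> A" "r \<in> open_box a b" "s \<in> open_box a b"
    and PQ: "P = x + r" "Q = y + s" by blast
  with assms obtain g :: "real \<Rightarrow> real ^ 'n" where g: "continuous_on {0..1} g" "g ` {0..1} \<subseteq> A"
    "g 0 = x" "g 1 = y" "\<And>i. monotonic_on {0..1} (\<lambda>t. g t $ i)"
    unfolding monovex_def by meson
  obtain \<delta> where \<delta>: "continuous_on {0..1} \<delta>" "\<delta> 0 = g 0 + r" "\<delta> 1 = g 1 + s"
    "\<And>t. \<delta> t - g t \<in> open_box a b" "\<And>i. monotonic_on {0..1} (\<lambda>t. \<delta> t $ i)"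
    using monotone_path_add_box[OF g(1,5) \<open>r \<in> _\<close> \<open>s \<in> _\<close>] by blast
  have "\<delta> ` {0..1} \<subseteq> ?B"
  proof (rule image_subsetI)
    fix t :: real assume "t \<in> {0..1}"
    then have "g t \<in> A" using g(2) by blast
    moreover have "\<delta> t = g t + (\<delta> t - g t)" by simp
    ultimately show "\<delta> t \<in> ?B" using \<delta>(4)[of t] by blast
  qed
  then show "\<exists>\<gamma> :: real \<Rightarrow> real ^ 'n. continuous_on {0..1} \<gamma> \<and> \<gamma> ` {0..1} \<subseteq> ?B \<and> \<gamma> 0 = P \<and> \<gamma> 1 = Q \<and>
    (\<forall>i. monotonic_on {0..1} (\<lambda>t. \<gamma> t $ i))"
    using \<delta> g(3,4) PQ by (intro exI[of _ \<delta>]) simp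
qed

end
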